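(* The top cycle satisfies the TS-exclusive monotonicity criterion and the TS-exclusive negative monotonicity (ENM) criterion.
   Context: A tournament $T=(V(T),\succ)$ is a finite set of candidates with an asymmetric and complete binary relation $\succ$. $N^+_T(c)=\{b: c\succ b\}$; $T[B]$ is the subtournament induced by $B$. The top cycle $TC(T)$ is the unique minimal nonempty subset $X\subseteq V(T)$ such that $x\succ y$ for every $x\in X$ and every $y\in V(T)\setminus X$. For a tournament solution $f$ (a map sending every tournament $T$ to a nonempty subset of $V(T)$), say $(T,T')$ with $T=(\mathcal{C},\succ)$, $T'=(\mathcal{C},\succ')$ is a $c$-improvement if $T[\mathcal{C}\setminus\{c\}]=T'[\mathcal{C}\setminus\{c\}]$ and $N^+_T(c)\subseteq N^+_{T'}(c)$. - $f$ is TS-exclusive monotonic if for every $c$-improvement $(T,T')$ with $c\in f(T)$, we have $c\in f(T')$ and $f(T')\subseteq f(T)$. - $f$ satisfies TS-ENM if for every $c$-improvement $(T,T')$ with $c\notin f(T)$, $f(T')\not\subseteq f(T)$ implies $c\in f(T')$. *)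

theory Defs
  imports Main
begin

text \<open>A tournament on candidate set C is a finite nonempty set C with an asymmetric,
complete (on distinct pairs) relation R \<subseteq> C \<times> C; (x,y) \<in> R means x beats y.\<close>

definition tournament :: "'a set \<Rightarrow> ('a \<times> 'a) set \<Rightarrow> bool" where
  "tournament C R \<longleftrightarrow> finite C \<and> C \<noteq> {} \<and> R \<subseteq> C \<times> C \<and>
     (\<forall>x y. (x, y) \<in> R \<longrightarrow> (y, x) \<notin> R) \<and>
     (\<forall>x\<in>C. \<forall>y\<in>C. x \<noteq> y \<longrightarrow> (x, y) \<in> R \<or> (y, x) \<in> R)"

definition out_nbhd :: "('a \<times> 'a) set \<Rightarrow> 'a \<Rightarrow> 'a set" where
  "out_nbhd R c = {b. (c, b) \<in> R}"

definition restrict_rel :: "('a \<times> 'a) set \<Rightarrow> 'a set \<Rightarrow> ('a \<times> 'a) set" where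
  "restrict_rel R B = R \<inter> (B \<times> B)"

definition dominant_set :: "'a set \<Rightarrow> ('a \<times> 'a) set \<Rightarrow> 'a set \<Rightarrow> bool" where
  "dominant_set C R X \<longleftrightarrow> X \<noteq> {} \<and> X \<subseteq> C \<and> (\<forall>x\<in>X. \<forall>y\<in>C - X. (x, y) \<in> R)"

definition top_cycle :: "'a set \<Rightarrow> ('a \<times> 'a) set \<Rightarrow> 'a set" where
  "top_cycle C R = (THE X. dominant_set C R X \<and> (\<forall>Y. dominant_set C R Y \<and> Y \<subseteq> X \<longrightarrow> Y = X))"

definition c_improvement :: "'a set \<Rightarrow> ('a \<times> 'a) set \<Rightarrow> ('a \<times> 'a) set \<Rightarrow> 'a \<Rightarrow> bool" where
  "c_improvement C R R' c \<longleftrightarrow> tournament C R \<and> tournament C R' \<and> c \<in> C \<and>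
     restrict_rel R (C - {c}) = restrict_rel R' (C - {c}) \<and>
     out_nbhd R c \<subseteq> out_nbhd R' c"

type_synonym 'a tsolution = "'a set \<Rightarrow> ('a \<times> 'a) set \<Rightarrow> 'a set"

definition TS_exclusive_monotonic :: "'a tsolution \<Rightarrow> bool" where
  "TS_exclusive_monotonic f \<longleftrightarrow> (\<forall>C R R' c. c_improvement C R R' c \<and> c \<in> f C R \<longrightarrow>
      c \<in> f C R' \<and> f C R' \<subseteq> f C R)"

definition TS_ENM :: "'a tsolution \<Rightarrow> bool" where
  "TS_ENM f \<longleftrightarrow> (\<forall>C R R' c. c_improvement C R R' c \<and> c \<notin> f C R \<longrightarrow>
      (\<not> f C R' \<subseteq> f C R \<longrightarrow> c \<in> f C R'))"

end

theory Submission
  imports Defs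
begin

text \<open>In a tournament the dominant sets form a chain, so the top cycle is the least dominant
set. Under a c-improvement a dominant set avoiding c stays dominant in the old tournament
(c only gained victories), and a dominant set containing c stays dominant in the new one.
Hence if c misses the new top cycle, the old top cycle is contained in it; every member of
the old top cycle then beats c in the new tournament, so it is dominant there as well and
the two top cycles coincide.\<close>

lemma dominant_sets_chain:
  assumes "tournament C R" "dominant_set C R X" "dominant_set C R Y"
  shows "X \<subseteq> Y \<or> Y \<subseteq> X"
proof (rule ccontr)
  assume "\<not> (X \<subseteq> Y \<or> Y \<subseteq> X)"
  then obtain x y where "x \<in> X" "x \<notin> Y" "y \<in> Y" "y \<notin> X" by blast
  with assms show False unfolding dominant_set_def tournament_def by blast
qed

lemma ex_least_dominant_set:
  assumes T: "tournament C R"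
  obtains X where "dominant_set C R X" "\<And>Y. dominant_set C R Y \<Longrightarrow> X \<subseteq> Y"
proof -
  have "dominant_set C R C"
    using T unfolding tournament_def dominant_set_def by auto
  then obtain X where X: "dominant_set C R X"
    and min_card: "\<And>Y. dominant_set C R Y \<Longrightarrow> card X \<le> card Y"
    using ex_has_least_nat[of "dominant_set C R" C card] by blast
  have "finite X"
    using T X unfolding tournament_def dominant_set_def by (auto intro: finite_subset)
  have "X \<subseteq> Y" if Y: "dominant_set C R Y" for Y
  proof (rule ccontr)
    assume "\<not> X \<subseteq> Y"
    with dominant_sets_chain[OF T X Y] have "Y \<subset> X" by blast
    with \<open>finite X\<close> have "card Y < card X" by (simp add: psubset_card_mono)
    with min_card[OF Y] show False by simp
  qed
  with X that show thesis by blast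
qed

lemma
  assumes "tournament C R"
  shows dominant_top_cycle: "dominant_set C R (top_cycle C R)"
    and top_cycle_least: "\<And>Y. dominant_set C R Y \<Longrightarrow> top_cycle C R \<subseteq> Y"
proof -
  obtain X where X: "dominant_set C R X" and least: "\<And>Y. dominant_set C R Y \<Longrightarrow> X \<subseteq> Y"
    using ex_least_dominant_set[OF assms] by blast
  have "top_cycle C R = X"
    unfolding top_cycle_def
    by (rule the_equality) (use X least in blast)+
  with X least show "dominant_set C R (top_cycle C R)"
    and "\<And>Y. dominant_set C R Y \<Longrightarrow> top_cycle C R \<subseteq> Y" by simp_all
qed

lemma c_improvement_edge_iff:
  assumes "c_improvement C R R' c" "x \<in> C" "y \<in> C" "x \<noteq> c" "y \<noteq> c"
  shows "(x, y) \<in> R' \<longleftrightarrow> (x, y) \<in> R"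
proof -
  have "restrict_rel R (C - {c}) = restrict_rel R' (C - {c})"
    using assms(1) unfolding c_improvement_def by blast
  with assms(2-) show ?thesis unfolding restrict_rel_def by blast
qed

lemma c_improvement_out_edge:
  assumes "c_improvement C R R' c" "(c, y) \<in> R"
  shows "(c, y) \<in> R'"
  using assms unfolding c_improvement_def out_nbhd_def by blast

lemma c_improvement_in_edge:
  assumes "c_improvement C R R' c" "(x, c) \<in> R'"
  shows "(x, c) \<in> R"
proof -
  have T: "tournament C R" and T': "tournament C R'"
    using assms(1) unfolding c_improvement_def by auto
  then have "x \<in> C" "c \<in> C" "x \<noteq> c" "(c, x) \<notin> R'"
    using assms(2) unfolding tournament_def by blast+
  then have "(c, x) \<notin> R" using c_improvement_out_edge[OF assms(1)] by blast
  with T \<open>x \<in> C\<close> \<open>c \<in> C\<close> \<open>x \<noteq> c\<close> show ?thesis unfolding tournament_def by blast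
qed

lemma dominant_set_c_improvement_back:
  assumes imp: "c_improvement C R R' c" and D: "dominant_set C R' X" and "c \<notin> X"
  shows "dominant_set C R X"
  unfolding dominant_set_def
proof (intro conjI ballI)
  show "X \<noteq> {}" "X \<subseteq> C" using D unfolding dominant_set_def by auto
next
  fix x y assume x: "x \<in> X" and y: "y \<in> C - X"
  have "x \<in> C" "x \<noteq> c" and xy: "(x, y) \<in> R'"
    using D x y \<open>c \<notin> X\<close> unfolding dominant_set_def by auto
  show "(x, y) \<in> R"
  proof (cases "y = c")
    case True
    with xy show ?thesis using c_improvement_in_edge[OF imp] by blast
  next
    case False
    with xy y show ?thesis using c_improvement_edge_iff[OF imp \<open>x \<in> C\<close> _ \<open>x \<noteq> c\<close>] by blast
  qed
qed

lemma dominant_set_c_improvement: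
  assumes imp: "c_improvement C R R' c" and D: "dominant_set C R X"
    and beat_c: "\<And>x. c \<notin> X \<Longrightarrow> x \<in> X \<Longrightarrow> (x, c) \<in> R'"
  shows "dominant_set C R' X"
  unfolding dominant_set_def
proof (intro conjI ballI)
  show "X \<noteq> {}" "X \<subseteq> C" using D unfolding dominant_set_def by auto
next
  fix x y assume x: "x \<in> X" and y: "y \<in> C - X"
  have "x \<in> C" and xy: "(x, y) \<in> R" using D x y unfolding dominant_set_def by auto
  consider "x = c" | "y = c" | "x \<noteq> c" "y \<noteq> c" by blast
  then show "(x, y) \<in> R'"
  proof cases
    case 1
    with xy show ?thesis using c_improvement_out_edge[OF imp] by blast
  next
    case 2
    with x y show ?thesis using beat_c by blast
  next
    case 3
    with xy y show ?thesis using c_improvement_edge_iff[OF imp \<open>x \<in> C\<close>] by blast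
  qed
qed

lemma top_cycle_c_improvement_eq:
  assumes imp: "c_improvement C R R' c" and c_notin: "c \<notin> top_cycle C R'"
  shows "top_cycle C R' = top_cycle C R"
proof
  have T: "tournament C R" and T': "tournament C R'" and "c \<in> C"
    using imp unfolding c_improvement_def by auto
  have "dominant_set C R (top_cycle C R')"
    using dominant_set_c_improvement_back[OF imp dominant_top_cycle[OF T'] c_notin] .
  then show old_sub: "top_cycle C R \<subseteq> top_cycle C R'"
    using top_cycle_least[OF T] by blast
  have "(x, c) \<in> R'" if "x \<in> top_cycle C R" for x
    using dominant_top_cycle[OF T'] old_sub that c_notin \<open>c \<in> C\<close>
    unfolding dominant_set_def by blast
  then have "dominant_set C R' (top_cycle C R)"
    using dominant_set_c_improvement[OF imp dominant_top_cycle[OF T]] by blast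
  then show "top_cycle C R' \<subseteq> top_cycle C R"
    using top_cycle_least[OF T'] by blast
qed

theorem lemma1:
  shows "TS_exclusive_monotonic (top_cycle :: 'a tsolution) \<and> TS_ENM (top_cycle :: 'a tsolution)"
proof
  show "TS_exclusive_monotonic (top_cycle :: 'a tsolution)"
    unfolding TS_exclusive_monotonic_def
  proof (intro allI impI, elim conjE)
    fix C R R' and c :: 'a
    assume imp: "c_improvement C R R' c" and c_in: "c \<in> top_cycle C R"
    have T: "tournament C R" and T': "tournament C R'"
      using imp unfolding c_improvement_def by auto
    have "dominant_set C R' (top_cycle C R)"
      using dominant_set_c_improvement[OF imp dominant_top_cycle[OF T]] c_in by blast
    then have "top_cycle C R' \<subseteq> top_cycle C R"
      by (rule top_cycle_least[OF T'])
    moreover have "c \<in> top_cycle C R'"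
    proof (rule ccontr)
      assume "c \<notin> top_cycle C R'"
      with top_cycle_c_improvement_eq[OF imp] c_in show False by simp
    qed
    ultimately show "c \<in> top_cycle C R' \<and> top_cycle C R' \<subseteq> top_cycle C R" by blast
  qed
next
  show "TS_ENM (top_cycle :: 'a tsolution)"
    unfolding TS_ENM_def
  proof (intro allI impI, elim conjE)
    fix C R R' and c :: 'a
    assume imp: "c_improvement C R R' c" and "\<not> top_cycle C R' \<subseteq> top_cycle C R"
    then show "c \<in> top_cycle C R'" using top_cycle_c_improvement_eq[OF imp] by auto
  qed
qed

end
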